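(* Let $G$ be a connected (claw, bull)-free graph with $\ell(G)\le 3$ and $\alpha(G)\ge 3$. Then: (1) $\mathrm{diam}(G)\ge 4$; and (2) $G$ is an expansion of a path.
   Context: A claw is a graph isomorphic to $K_{1,3}$; a bull is the graph obtained from a triangle by adding two pendant edges at two different vertices. A graph is (claw, bull)-free if it has no induced claw and no induced bull. $\ell(G)$ is the length of a longest induced cycle in $G$; $\ell(G)\le 3$ means $G$ has no induced cycle of length at least $4$. $\alpha(G)$ is the independence number and $\mathrm{diam}(G)$ the diameter. An expansion of a graph $F$ with vertex set $\{v_1,\dots,v_n\}$ is any graph obtained from $F$ by replacing each vertex $v_i$ by a nonempty clique $K^{[i]}$, the cliques being pairwise vertex-disjoint, and adding all edges between $V(K^{[i]})$ and $V(K^{[j]})$ whenever $v_iv_j\in E(F)$ (and no other edges between different cliques). *)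

theory Defs
  imports Main
begin

definition graph :: "'a set \<Rightarrow> ('a \<Rightarrow> 'a \<Rightarrow> bool) \<Rightarrow> bool" where
  "graph V E \<longleftrightarrow> finite V \<and> (\<forall>x\<in>V. \<forall>y\<in>V. E x y \<longleftrightarrow> E y x) \<and> (\<forall>x\<in>V. \<not> E x x)"

definition has_induced :: "'a set \<Rightarrow> ('a \<Rightarrow> 'a \<Rightarrow> bool) \<Rightarrow> 'b set \<Rightarrow> ('b \<Rightarrow> 'b \<Rightarrow> bool) \<Rightarrow> bool" where
  "has_induced V E HV HE \<longleftrightarrow>
     (\<exists>f. inj_on f HV \<and> f ` HV \<subseteq> V \<and> (\<forall>a\<in>HV. \<forall>b\<in>HV. E (f a) (f b) \<longleftrightarrow> HE a b))"

definition claw_E :: "nat \<Rightarrow> nat \<Rightarrow> bool" where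
  "claw_E a b \<longleftrightarrow> (a = 0 \<and> b \<in> {1,2,3}) \<or> (b = 0 \<and> a \<in> {1,2,3})"

definition bull_E :: "nat \<Rightarrow> nat \<Rightarrow> bool" where
  "bull_E a b \<longleftrightarrow> {a, b} \<in> {{0,1},{1,2},{0,2},{0,3},{1,4}}"

definition claw_free :: "'a set \<Rightarrow> ('a \<Rightarrow> 'a \<Rightarrow> bool) \<Rightarrow> bool" where
  "claw_free V E \<longleftrightarrow> \<not> has_induced V E {0..<4} claw_E"

definition bull_free :: "'a set \<Rightarrow> ('a \<Rightarrow> 'a \<Rightarrow> bool) \<Rightarrow> bool" where
  "bull_free V E \<longleftrightarrow> \<not> has_induced V E {0..<5} bull_E"

definition cycle_E :: "nat \<Rightarrow> nat \<Rightarrow> nat \<Rightarrow> bool" where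
  "cycle_E k a b \<longleftrightarrow> a \<noteq> b \<and> ((a + 1) mod k = b \<or> (b + 1) mod k = a)"

definition longest_induced_cycle_le3 :: "'a set \<Rightarrow> ('a \<Rightarrow> 'a \<Rightarrow> bool) \<Rightarrow> bool" where
  "longest_induced_cycle_le3 V E \<longleftrightarrow> (\<forall>k\<ge>4. \<not> has_induced V E {0..<k} (cycle_E k))"

definition independent :: "'a set \<Rightarrow> ('a \<Rightarrow> 'a \<Rightarrow> bool) \<Rightarrow> 'a set \<Rightarrow> bool" where
  "independent V E S \<longleftrightarrow> S \<subseteq> V \<and> (\<forall>x\<in>S. \<forall>y\<in>S. \<not> E x y)"

definition independence_number :: "'a set \<Rightarrow> ('a \<Rightarrow> 'a \<Rightarrow> bool) \<Rightarrow> nat" where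
  "independence_number V E = Max {card S | S. independent V E S}"

definition walk :: "'a set \<Rightarrow> ('a \<Rightarrow> 'a \<Rightarrow> bool) \<Rightarrow> 'a list \<Rightarrow> bool" where
  "walk V E xs \<longleftrightarrow> xs \<noteq> [] \<and> set xs \<subseteq> V \<and> (\<forall>i. Suc i < length xs \<longrightarrow> E (xs ! i) (xs ! Suc i))"

definition connected_graph :: "'a set \<Rightarrow> ('a \<Rightarrow> 'a \<Rightarrow> bool) \<Rightarrow> bool" where
  "connected_graph V E \<longleftrightarrow> V \<noteq> {} \<and>
     (\<forall>u\<in>V. \<forall>v\<in>V. \<exists>xs. walk V E xs \<and> hd xs = u \<and> last xs = v)"

definition dist :: "'a set \<Rightarrow> ('a \<Rightarrow> 'a \<Rightarrow> bool) \<Rightarrow> 'a \<Rightarrow> 'a \<Rightarrow> nat" where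
  "dist V E u v = (LEAST n. \<exists>xs. walk V E xs \<and> hd xs = u \<and> last xs = v \<and> length xs = Suc n)"

definition diam :: "'a set \<Rightarrow> ('a \<Rightarrow> 'a \<Rightarrow> bool) \<Rightarrow> nat" where
  "diam V E = Max {dist V E u v | u v. u \<in> V \<and> v \<in> V}"

definition expansion_of :: "'a set \<Rightarrow> ('a \<Rightarrow> 'a \<Rightarrow> bool) \<Rightarrow> nat \<Rightarrow> (nat \<Rightarrow> nat \<Rightarrow> bool) \<Rightarrow> bool" where
  "expansion_of V E n FE \<longleftrightarrow> (\<exists>K :: nat \<Rightarrow> 'a set.
     (\<forall>i<n. K i \<noteq> {}) \<and>
     (\<forall>i<n. \<forall>j<n. i \<noteq> j \<longrightarrow> K i \<inter> K j = {}) \<and>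
     (\<Union>i<n. K i) = V \<and>
     (\<forall>i<n. \<forall>x\<in>K i. \<forall>y\<in>K i. x \<noteq> y \<longrightarrow> E x y) \<and>
     (\<forall>i<n. \<forall>j<n. i \<noteq> j \<longrightarrow> (\<forall>x\<in>K i. \<forall>y\<in>K j. E x y \<longleftrightarrow> FE i j)))"

definition path_E :: "nat \<Rightarrow> nat \<Rightarrow> bool" where
  "path_E i j \<longleftrightarrow> i + 1 = j \<or> j + 1 = i"

definition expansion_of_path :: "'a set \<Rightarrow> ('a \<Rightarrow> 'a \<Rightarrow> bool) \<Rightarrow> bool" where
  "expansion_of_path V E \<longleftrightarrow> (\<exists>n\<ge>1. expansion_of V E n path_E)"

end

theory Submission
  imports Defs
begin

text \<open>
  Let \<open>p 0, ..., p (m - 1)\<close> be a longest induced path. Claw- and bull-freeness, the absence of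
  induced cycles of length at least 4 and the maximality of the path force every vertex off the
  path that has a neighbour on it to see exactly \<open>p (i - 1), p i, p (i + 1)\<close> for some \<open>i\<close>, its
  type, or else to see the whole path, which then has 4 vertices; by connectivity every vertex
  has a neighbour on the path. Three independent vertices rule out \<open>m \<le> 4\<close>. For \<open>m \<ge> 5\<close>,
  vertices of equal or consecutive types are adjacent and vertices whose types differ by at least
  2 are not, so the types are the cliques of an expansion of the path; and since a walk changes
  the type by at most one per step, \<open>p 0\<close> and \<open>p (m - 1)\<close> are at distance \<open>m - 1 \<ge> 4\<close>.
\<close>

definition induced_path :: "'a set \<Rightarrow> ('a \<Rightarrow> 'a \<Rightarrow> bool) \<Rightarrow> (nat \<Rightarrow> 'a) \<Rightarrow> nat \<Rightarrow> bool" where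
  "induced_path V E p m \<longleftrightarrow> (\<forall>i<m. p i \<in> V) \<and> inj_on p {..<m} \<and>
     (\<forall>i<m. \<forall>j<m. E (p i) (p j) \<longleftrightarrow> path_E i j)"

lemma cycle_E_iff:
  assumes "i < L" "j < L" "3 \<le> L"
  shows "cycle_E L i j \<longleftrightarrow> i + 1 = j \<or> j + 1 = i \<or> (i = 0 \<and> j = L - 1) \<or> (j = 0 \<and> i = L - 1)"
proof -
  have "(i + 1) mod L = (if i + 1 = L then 0 else i + 1)" "(j + 1) mod L = (if j + 1 = L then 0 else j + 1)"
    using assms by auto
  then show ?thesis unfolding cycle_E_def using assms by auto
qed

lemma induced_path_shift:
  assumes "induced_path V E p m" "a + n \<le> m"
  shows "induced_path V E (\<lambda>t. p (a + t)) n"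
proof -
  have "inj_on (\<lambda>t. p (a + t)) {..<n}"
    using assms unfolding induced_path_def inj_on_def by fastforce
  then show ?thesis using assms unfolding induced_path_def path_E_def by auto
qed

lemma case_nat_image_lessThan_Suc: "case_nat u q ` {..<Suc n} = insert u (q ` {..<n})"
  by (auto simp: lessThan_Suc_eq_insert_0 image_image)

lemma induced_path_card_le:
  assumes "finite V" "induced_path V E p m"
  shows "m \<le> card V"
proof -
  have "p ` {..<m} \<subseteq> V" "inj_on p {..<m}" using assms(2) unfolding induced_path_def by auto
  then have "card (p ` {..<m}) = m" "card (p ` {..<m}) \<le> card V"
    using card_image card_mono[OF assms(1)] by fastforce+
  then show ?thesis by simp
qed

lemma longest_induced_path_exists:
  assumes "finite V"
  obtains p m where "induced_path V E p m" "\<And>q n. induced_path V E q n \<Longrightarrow> n \<le> m"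
proof -
  define lengths where "lengths = {n. \<exists>q. induced_path V E q n}"
  have "finite lengths"
    using induced_path_card_le[OF assms] unfolding lengths_def
    by (intro finite_nat_set_iff_bounded_le[THEN iffD2]) blast
  moreover have "0 \<in> lengths" unfolding lengths_def induced_path_def by auto
  ultimately have "Max lengths \<in> lengths" "\<And>n. n \<in> lengths \<Longrightarrow> n \<le> Max lengths"
    using Max_in by auto
  then show ?thesis using that unfolding lengths_def by blast
qed

definition independent_triple :: "'a set \<Rightarrow> ('a \<Rightarrow> 'a \<Rightarrow> bool) \<Rightarrow> 'a \<Rightarrow> 'a \<Rightarrow> 'a \<Rightarrow> bool" where
  "independent_triple V E a b c \<longleftrightarrow> a \<in> V \<and> b \<in> V \<and> c \<in> V \<and> a \<noteq> b \<and> a \<noteq> c \<and> b \<noteq> c \<and>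
     \<not> E a b \<and> \<not> E a c \<and> \<not> E b c"

lemma independent_tripleD:
  assumes "independent_triple V E a b c"
  shows "a \<in> V" "b \<in> V" "c \<in> V" "a \<noteq> b" "a \<noteq> c" "b \<noteq> c" "\<not> E a b" "\<not> E a c" "\<not> E b c"
  using assms unfolding independent_triple_def by auto

lemma independent_triple_exists:
  assumes "finite V" "independence_number V E \<ge> 3"
  obtains a b c where "independent_triple V E a b c"
proof -
  define sizes where "sizes = {card S | S. independent V E S}"
  have "sizes \<subseteq> {..card V}"
    using card_mono[OF assms(1)] unfolding sizes_def independent_def by auto
  then have "finite sizes" by (rule finite_subset) simp
  moreover have "card {} \<in> sizes" unfolding sizes_def independent_def by (intro CollectI exI[of _ "{}"]) simp
  ultimately have "Max sizes \<in> sizes" using Max_in by blast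
  then obtain S where S: "independent V E S" "3 \<le> card S"
    using assms(2) unfolding sizes_def independence_number_def by auto
  then obtain T where T: "T \<subseteq> S" "card T = 3" using obtain_subset_with_card_n by metis
  then obtain a b c where "T = {a, b, c}" "a \<noteq> b" "a \<noteq> c" "b \<noteq> c"
    using card_3_iff[of T] by auto
  moreover have "S \<subseteq> V" "\<forall>x\<in>S. \<forall>y\<in>S. \<not> E x y" using S(1) unfolding independent_def by auto
  moreover have "a \<in> S" "b \<in> S" "c \<in> S" using T(1) \<open>T = {a, b, c}\<close> by auto
  ultimately show ?thesis using that unfolding independent_triple_def by blast
qed

lemma shortest_walk_exists:
  assumes "walk V E xs" "hd xs = u" "last xs = v"
  obtains ys where "walk V E ys" "hd ys = u" "last ys = v" "length ys = Suc (dist V E u v)"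
proof -
  let ?Q = "\<lambda>n. \<exists>ys. walk V E ys \<and> hd ys = u \<and> last ys = v \<and> length ys = Suc n"
  have "?Q (length xs - 1)" using assms unfolding walk_def by (intro exI[of _ xs]) auto
  then have "?Q (LEAST n. ?Q n)" by (rule LeastI)
  then show ?thesis using that unfolding dist_def by blast
qed

lemma dist_le_diam:
  assumes "finite V" "u \<in> V" "v \<in> V"
  shows "dist V E u v \<le> diam V E"
  unfolding diam_def
proof (rule Max_ge)
  show "finite {dist V E u v |u v. u \<in> V \<and> v \<in> V}"
    using finite_image_set2[of "\<lambda>u. u \<in> V" "\<lambda>v. v \<in> V" "dist V E"] assms(1) by simp
qed (use assms in blast)

lemma walk_Cons_Cons:
  assumes "walk V E (x # y # ys)"
  shows "walk V E (y # ys)" "E x y"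
proof -
  have step: "E ((x # y # ys) ! i) ((x # y # ys) ! Suc i)" if "Suc i < length (x # y # ys)" for i
    using assms that unfolding walk_def by blast
  show "E x y" using step[of 0] by simp
  show "walk V E (y # ys)" using assms step[of "Suc _"] unfolding walk_def by auto
qed

locale simple_graph =
  fixes V :: "'a set" and E :: "'a \<Rightarrow> 'a \<Rightarrow> bool"
  assumes graph: "graph V E"
begin

lemma adj_sym: "x \<in> V \<Longrightarrow> y \<in> V \<Longrightarrow> E x y \<Longrightarrow> E y x"
  using graph unfolding graph_def by blast

lemma not_adj_self: "x \<in> V \<Longrightarrow> \<not> E x x"
  using graph unfolding graph_def by blast

lemma finite_vertices: "finite V"
  using graph unfolding graph_def by blast

lemma induced_path_single: "v \<in> V \<Longrightarrow> induced_path V E (\<lambda>_. v) 1"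
  using not_adj_self unfolding induced_path_def path_E_def inj_on_def by auto

lemma induced_path_Cons:
  assumes "induced_path V E q n" "z \<in> V" "z \<notin> q ` {..<n}" "\<forall>k<n. E z (q k) \<longleftrightarrow> k = 0"
  shows "induced_path V E (case_nat z q) (Suc n)"
proof -
  have qV: "\<forall>i<n. q i \<in> V" and "inj_on q {..<n}"
    and qE: "\<forall>i<n. \<forall>j<n. E (q i) (q j) \<longleftrightarrow> path_E i j"
    using assms(1) unfolding induced_path_def by auto
  then have "inj_on (case_nat z q) {..<Suc n}"
    using assms(3) by (auto simp: inj_on_def split: nat.split)
  moreover have "E (q k) z \<longleftrightarrow> k = 0" if "k < n" for k
    using assms(2,4) qV that adj_sym by blast
  ultimately show ?thesis
    using assms(2,4) qV qE not_adj_self unfolding induced_path_def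
    by (auto simp: path_E_def split: nat.split)
qed

lemma induced_path_snoc:
  assumes "induced_path V E q n" "z \<in> V" "z \<notin> q ` {..<n}" "\<forall>k<n. E z (q k) \<longleftrightarrow> Suc k = n"
  shows "induced_path V E (q(n := z)) (Suc n)"
proof -
  have qV: "\<forall>i<n. q i \<in> V" and "inj_on q {..<n}"
    and qE: "\<forall>i<n. \<forall>j<n. E (q i) (q j) \<longleftrightarrow> path_E i j"
    using assms(1) unfolding induced_path_def by auto
  then have "inj_on (q(n := z)) {..<Suc n}"
    using assms(3) by (auto simp: inj_on_def)
  moreover have "E (q k) z \<longleftrightarrow> Suc k = n" if "k < n" for k
    using assms(2,4) qV that adj_sym by blast
  ultimately show ?thesis
    using assms(2,4) qV qE not_adj_self unfolding induced_path_def
    by (auto simp: path_E_def less_Suc_eq)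
qed

lemma induced_P3:
  assumes "x \<in> V" "y \<in> V" "z \<in> V" "E x y" "E y z" "\<not> E x z" "x \<noteq> z"
  shows "induced_path V E (case_nat x (case_nat y (\<lambda>_. z))) 3"
proof -
  have "y \<noteq> z" "x \<noteq> y" using assms not_adj_self by auto
  then have "induced_path V E (case_nat y (\<lambda>_. z)) (Suc 1)"
    using assms by (intro induced_path_Cons induced_path_single) auto
  then have "induced_path V E (case_nat x (case_nat y (\<lambda>_. z))) (Suc (Suc 1))"
    by (rule induced_path_Cons) (use assms \<open>x \<noteq> y\<close> in \<open>auto simp: less_Suc_eq\<close>)
  then show ?thesis by (simp add: numeral_3_eq_3)
qed

end

locale chordal_claw_bull_free_graph = simple_graph +
  assumes claw_free: "claw_free V E" and bull_free: "bull_free V E"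
    and chordal: "longest_induced_cycle_le3 V E"
begin

lemma no_induced_claw:
  assumes "c \<in> V" "x \<in> V" "y \<in> V" "z \<in> V" "E c x" "E c y" "E c z"
    "\<not> E x y" "\<not> E x z" "\<not> E y z" "x \<noteq> y" "x \<noteq> z" "y \<noteq> z"
  shows False
proof -
  let ?f = "\<lambda>i::nat. if i = 0 then c else if i = 1 then x else if i = 2 then y else z"
  have "E x c" "E y c" "E z c" "\<not> E y x" "\<not> E z x" "\<not> E z y"
    using assms adj_sym by blast+
  moreover have "\<not> E c c" "\<not> E x x" "\<not> E y y" "\<not> E z z" using assms not_adj_self by auto
  moreover have "c \<noteq> x" "c \<noteq> y" "c \<noteq> z" using assms not_adj_self by metis+
  moreover have "{0..<4::nat} = {0, 1, 2, 3}" by auto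
  ultimately have "has_induced V E {0..<4} claw_E"
    unfolding has_induced_def using assms
    by (intro exI[of _ ?f]) (auto simp: inj_on_def claw_E_def)
  with claw_free show False unfolding claw_free_def by simp
qed

lemma no_induced_bull:
  assumes "a \<in> V" "b \<in> V" "c \<in> V" "d \<in> V" "e \<in> V"
    "E a b" "E b c" "E a c" "E a d" "E b e"
    "\<not> E d b" "\<not> E d c" "\<not> E e a" "\<not> E e c" "\<not> E d e"
  shows False
proof -
  let ?f = "\<lambda>i::nat. if i = 0 then a else if i = 1 then b else if i = 2 then c else if i = 3 then d else e"
  have sym: "E b a" "E c b" "E c a" "E d a" "E e b" "\<not> E b d" "\<not> E c d" "\<not> E a e" "\<not> E c e" "\<not> E e d"
    using assms adj_sym by blast+
  moreover have irr: "\<not> E a a" "\<not> E b b" "\<not> E c c" "\<not> E d d" "\<not> E e e" using assms not_adj_self by auto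
  moreover have "a \<noteq> b" "a \<noteq> c" "a \<noteq> d" "a \<noteq> e" "b \<noteq> c" "b \<noteq> d" "b \<noteq> e" "c \<noteq> d" "c \<noteq> e" "d \<noteq> e"
    using assms sym irr by metis+
  moreover have "{0..<5::nat} = {0, 1, 2, 3, 4}" by auto
  ultimately have "has_induced V E {0..<5} bull_E"
    unfolding has_induced_def using assms
    by (intro exI[of _ ?f]) (auto simp: inj_on_def bull_E_def doubleton_eq_iff)
  with bull_free show False unfolding bull_free_def by simp
qed

lemma no_long_induced_cycle:
  assumes "4 \<le> L" "\<forall>i<L. q i \<in> V" "inj_on q {..<L}"
    "\<forall>i<L. \<forall>j<L. E (q i) (q j) \<longleftrightarrow> cycle_E L i j"
  shows False
proof -
  have "has_induced V E {0..<L} (cycle_E L)"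
    unfolding has_induced_def using assms by (intro exI[of _ q]) (auto simp: atLeast0LessThan)
  with chordal assms(1) show False unfolding longest_induced_cycle_le3_def by blast
qed

lemma no_induced_C4:
  assumes "a \<in> V" "b \<in> V" "c \<in> V" "d \<in> V" "E a b" "E b c" "E c d" "E d a" "\<not> E a c" "\<not> E b d"
    "a \<noteq> c" "b \<noteq> d"
  shows False
proof (rule no_long_induced_cycle)
  let ?f = "\<lambda>i::nat. if i = 0 then a else if i = 1 then b else if i = 2 then c else d"
  have sym: "E b a" "E c b" "E d c" "E a d" "\<not> E c a" "\<not> E d b"
    using assms adj_sym by blast+
  have irr: "\<not> E a a" "\<not> E b b" "\<not> E c c" "\<not> E d d" using assms not_adj_self by auto
  have distinct: "a \<noteq> b" "a \<noteq> d" "b \<noteq> c" "c \<noteq> d" using assms irr by metis+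
  have four: "{..<4::nat} = {0, 1, 2, 3}" by auto
  show "inj_on ?f {..<4}" unfolding four inj_on_def using distinct assms(11,12) by auto
  show "\<forall>i<4. ?f i \<in> V" using assms(1-4) by auto
  have "\<forall>i\<in>{..<4}. \<forall>j\<in>{..<4}. E (?f i) (?f j) = cycle_E 4 i j"
    unfolding four using assms sym irr by (auto simp: cycle_E_def)
  then show "\<forall>i<4. \<forall>j<4. E (?f i) (?f j) \<longleftrightarrow> cycle_E 4 i j" by auto
qed simp

lemma no_vertex_closing_induced_path:
  assumes "induced_path V E r n" "3 \<le> n" "z \<in> V" "z \<notin> r ` {..<n}"
    "\<forall>k<n. E z (r k) \<longleftrightarrow> k = 0 \<or> Suc k = n"
  shows False
proof (rule no_long_induced_cycle[of "Suc n" "case_nat z r"])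
  have rV: "\<forall>i<n. r i \<in> V" and "inj_on r {..<n}"
    and rE: "\<forall>i<n. \<forall>j<n. E (r i) (r j) \<longleftrightarrow> path_E i j"
    using assms(1) unfolding induced_path_def by auto
  then show "inj_on (case_nat z r) {..<Suc n}"
    using assms(4) by (auto simp: inj_on_def split: nat.split)
  show "4 \<le> Suc n" using assms(2) by simp
  show "\<forall>i<Suc n. case_nat z r i \<in> V" using rV assms(3) by (auto split: nat.split)
  have zE: "E (r k) z \<longleftrightarrow> k = 0 \<or> Suc k = n" if "k < n" for k
    using assms(3,5) rV that adj_sym by blast
  show "\<forall>i<Suc n. \<forall>j<Suc n. E (case_nat z r i) (case_nat z r j) \<longleftrightarrow> cycle_E (Suc n) i j"
  proof (intro allI impI)
    fix i j assume i: "i < Suc n" and j: "j < Suc n"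
    then have "cycle_E (Suc n) i j \<longleftrightarrow> i + 1 = j \<or> j + 1 = i \<or> (i = 0 \<and> j = n) \<or> (j = 0 \<and> i = n)"
      using cycle_E_iff[OF i j] assms(2) by simp
    then show "E (case_nat z r i) (case_nat z r j) \<longleftrightarrow> cycle_E (Suc n) i j"
      using i j assms(2,3,5) zE rE not_adj_self by (cases i; cases j) (auto simp: path_E_def)
  qed
qed

lemma induced_path_nbrs_convex:
  assumes p: "induced_path V E p m" and z: "z \<in> V" "z \<notin> p ` {..<m}"
  shows "j < k \<Longrightarrow> k < l \<Longrightarrow> l < m \<Longrightarrow> E z (p j) \<Longrightarrow> E z (p l) \<Longrightarrow> E z (p k)"
proof (induction "l - j" arbitrary: j l rule: less_induct)
  case less
  show ?case
  proof (rule ccontr)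
    assume nk: "\<not> E z (p k)"
    show False
    proof (cases "\<exists>t. j < t \<and> t < l \<and> t \<noteq> k \<and> E z (p t)")
      case True
      then obtain t where t: "j < t" "t < l" "t \<noteq> k" "E z (p t)" by blast
      have "E z (p k)"
      proof (cases "t < k")
        case True
        show ?thesis by (rule less.hyps[of l t]) (use less.prems t True in auto)
      next
        case False
        show ?thesis by (rule less.hyps[of t j]) (use less.prems t False in auto)
      qed
      then show False using nk by simp
    next
      case False
      show False
      proof (rule no_vertex_closing_induced_path)
        show "induced_path V E (\<lambda>t. p (j + t)) (l - j + 1)"
          using induced_path_shift[OF p] less.prems by simp
        show "z \<notin> (\<lambda>t. p (j + t)) ` {..<l - j + 1}" using z(2) less.prems by auto
        show "\<forall>t<l - j + 1. E z (p (j + t)) \<longleftrightarrow> t = 0 \<or> Suc t = l - j + 1"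
        proof (intro allI impI)
          fix t assume "t < l - j + 1"
          moreover have "\<not> E z (p (j + t))" if "0 < t" "t < l - j"
            using False nk that less_diff_conv[of t l j] by (cases "j + t = k") (auto simp: add.commute)
          ultimately show "E z (p (j + t)) \<longleftrightarrow> t = 0 \<or> Suc t = l - j + 1"
            using less.prems by (cases "t = 0"; cases "t = l - j") auto
        qed
      qed (use less.prems z in auto)
    qed
  qed
qed

lemma induced_path_nbrs_span:
  assumes p: "induced_path V E p m" and z: "z \<in> V" "z \<notin> p ` {..<m}"
    and "j \<le> l" "l < m" "E z (p j)" "E z (p l)"
  shows "l \<le> j + 3"
proof (rule ccontr)
  assume "\<not> l \<le> j + 3"
  then have "E z (p (j + 4))"
    using induced_path_nbrs_convex[OF p z, of j "j + 4" l] assms(4-) by (cases "l = j + 4") auto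
  moreover have "E z (p (j + 2))"
    using induced_path_nbrs_convex[OF p z, of j "j + 2" l] assms(4-) \<open>\<not> l \<le> j + 3\<close> by auto
  moreover have "\<forall>i<m. p i \<in> V" "inj_on p {..<m}" "\<forall>i<m. \<forall>k<m. E (p i) (p k) \<longleftrightarrow> path_E i k"
    using p unfolding induced_path_def by auto
  moreover have "j + 4 < m" using \<open>\<not> l \<le> j + 3\<close> assms(5) by simp
  ultimately show False
    using assms(6) z
    by (intro no_induced_claw[of z "p j" "p (j + 2)" "p (j + 4)"]) (auto simp: path_E_def inj_on_eq_iff)
qed

lemma induced_path_nbrs_interval:
  assumes p: "induced_path V E p m" and z: "z \<in> V" "z \<notin> p ` {..<m}"
    and "k0 < m" "E z (p k0)"
  obtains a b where "a \<le> b" "b < m" "b \<le> a + 3" "\<forall>k<m. E z (p k) \<longleftrightarrow> a \<le> k \<and> k \<le> b"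
proof -
  define S where "S = {k. k < m \<and> E z (p k)}"
  have S: "finite S" "S \<noteq> {}" using assms(4,5) unfolding S_def by auto
  define a b where "a = Min S" and "b = Max S"
  have ends: "a < m" "E z (p a)" "b < m" "E z (p b)"
    using Min_in[OF S] Max_in[OF S] unfolding a_def b_def S_def by auto
  have bounds: "a \<le> k" "k \<le> b" if "k < m" "E z (p k)" for k
    using S that unfolding a_def b_def S_def by auto
  have "E z (p k) \<longleftrightarrow> a \<le> k \<and> k \<le> b" if "k < m" for k
    using bounds[OF that] ends induced_path_nbrs_convex[OF p z, of a k b] le_less
    by (cases "k = a \<or> k = b") auto
  moreover have "a \<le> b" using bounds ends by blast
  moreover then have "b \<le> a + 3" using ends induced_path_nbrs_span[OF p z] by blast
  ultimately show ?thesis using that ends by blast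
qed

end

section \<open>Attachments to a longest induced path\<close>

locale longest_induced_path = chordal_claw_bull_free_graph +
  fixes p :: "nat \<Rightarrow> 'a" and m :: nat
  assumes induced: "induced_path V E p m"
    and longest: "\<And>q n. induced_path V E q n \<Longrightarrow> n \<le> m"
begin

lemma path_vertex: "k < m \<Longrightarrow> p k \<in> V"
  using induced unfolding induced_path_def by auto

lemma path_eq_iff: "k < m \<Longrightarrow> l < m \<Longrightarrow> p k = p l \<longleftrightarrow> k = l"
  using induced unfolding induced_path_def inj_on_def by auto

lemma path_adj_iff: "k < m \<Longrightarrow> l < m \<Longrightarrow> E (p k) (p l) \<longleftrightarrow> Suc k = l \<or> Suc l = k"
  using induced unfolding induced_path_def path_E_def by auto

lemma no_single_attachment:
  assumes z: "z \<in> V" "z \<notin> p ` {..<m}" and "a < m" and nbrs: "\<forall>k<m. E z (p k) \<longleftrightarrow> k = a"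
  shows False
proof -
  have off: "z \<noteq> p k" "p k \<noteq> z" if "k < m" for k using z(2) that by auto
  have nbrs': "E (p k) z \<longleftrightarrow> k = a" if "k < m" for k
    using nbrs that adj_sym path_vertex z(1) by blast
  consider "a = 0" | "Suc a = m" | "0 < a" "a + 1 < m" using \<open>a < m\<close> by linarith
  then show False
  proof cases
    case 1
    then show False using longest[OF induced_path_Cons[OF induced z]] nbrs by simp
  next
    case 2
    then show False using longest[OF induced_path_snoc[OF induced z]] nbrs by auto
  next
    case 3
    then show False
      by (intro no_induced_claw[of "p a" "p (a - 1)" "p (a + 1)" z])
        (simp_all add: z path_vertex path_adj_iff path_eq_iff nbrs nbrs' off)
  qed
qed

lemma pair_attachment_at_end:
  assumes z: "z \<in> V" "z \<notin> p ` {..<m}" and "a + 1 < m"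
    and nbrs: "\<forall>k<m. E z (p k) \<longleftrightarrow> a \<le> k \<and> k \<le> a + 1"
  shows "a = 0 \<or> a + 2 = m"
proof (rule ccontr)
  assume "\<not> (a = 0 \<or> a + 2 = m)"
  then have "0 < a" "a + 2 < m" using \<open>a + 1 < m\<close> by auto
  moreover have off: "z \<noteq> p k" "p k \<noteq> z" if "k < m" for k using z(2) that by auto
  moreover have "E (p k) z \<longleftrightarrow> a \<le> k \<and> k \<le> a + 1" if "k < m" for k
    using nbrs that adj_sym path_vertex z(1) by blast
  ultimately show False
    using nbrs z(1) by (intro no_induced_bull[of "p a" "p (a + 1)" z "p (a - 1)" "p (a + 2)"])
      (simp_all add: path_vertex path_adj_iff path_eq_iff)
qed

lemma quadruple_attachment_spans_path:
  assumes z: "z \<in> V" "z \<notin> p ` {..<m}" and "a + 3 < m"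
    and nbrs: "\<forall>k<m. E z (p k) \<longleftrightarrow> a \<le> k \<and> k \<le> a + 3"
  shows "a = 0 \<and> m = 4"
proof -
  have off: "z \<noteq> p k" "p k \<noteq> z" if "k < m" for k using z(2) that by auto
  have nbrs': "E (p k) z \<longleftrightarrow> a \<le> k \<and> k \<le> a + 3" if "k < m" for k
    using nbrs that adj_sym path_vertex z(1) by blast
  have "a = 0"
  proof (rule ccontr)
    assume "a \<noteq> 0"
    then show False
      using nbrs nbrs' off z(1) \<open>a + 3 < m\<close>
      by (intro no_induced_bull[of z "p a" "p (a + 1)" "p (a + 3)" "p (a - 1)"])
        (simp_all add: path_vertex path_adj_iff path_eq_iff)
  qed
  moreover have "\<not> a + 4 < m"
  proof
    assume "a + 4 < m"
    then show False
      using nbrs nbrs' off z(1)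
      by (intro no_induced_bull[of z "p (a + 3)" "p (a + 2)" "p a" "p (a + 4)"])
        (simp_all add: path_vertex path_adj_iff path_eq_iff)
  qed
  ultimately show ?thesis using \<open>a + 3 < m\<close> by simp
qed

lemma off_path_nbrs_cases:
  assumes z: "z \<in> V" "z \<notin> p ` {..<m}" and "k0 < m" "E z (p k0)"
  shows "(\<exists>i<m. \<forall>k<m. E z (p k) \<longleftrightarrow> path_E i k \<or> k = i) \<or> (m = 4 \<and> (\<forall>k<m. E z (p k)))"
proof -
  obtain a b where ab: "a \<le> b" "b < m" "b \<le> a + 3" and nbrs: "\<forall>k<m. E z (p k) \<longleftrightarrow> a \<le> k \<and> k \<le> b"
    using induced_path_nbrs_interval[OF induced z assms(3,4)] by blast
  have centred: "\<exists>i<m. \<forall>k<m. E z (p k) \<longleftrightarrow> path_E i k \<or> k = i"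
    if "i < m" "a = i - 1 \<or> (a = 0 \<and> i = 0)" "b = i + 1 \<or> (b = i \<and> b + 1 = m)" for i
  proof (intro exI conjI allI impI)
    fix k assume "k < m"
    then show "E z (p k) \<longleftrightarrow> path_E i k \<or> k = i" using nbrs that unfolding path_E_def by auto
  qed (fact that)
  consider "b = a" | "b = a + 1" | "b = a + 2" | "b = a + 3" using ab by linarith
  then show ?thesis
  proof cases
    case 1
    then have "\<forall>k<m. E z (p k) \<longleftrightarrow> k = a" using nbrs by auto
    with no_single_attachment[OF z, of a] ab 1 show ?thesis by simp
  next
    case 2
    then have "a = 0 \<or> a + 2 = m" using pair_attachment_at_end[OF z, of a] nbrs ab by simp
    then show ?thesis
    proof
      assume "a = 0"
      then show ?thesis using centred[of 0] 2 ab by simp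
    next
      assume "a + 2 = m"
      then show ?thesis using centred[of "a + 1"] 2 ab by simp
    qed
  next
    case 3
    then show ?thesis using centred[of "a + 1"] ab by simp
  next
    case 4
    then have "a = 0 \<and> m = 4" using quadruple_attachment_spans_path[OF z, of a] nbrs ab by simp
    then show ?thesis using nbrs 4 by simp
  qed
qed

definition dominated :: "'a \<Rightarrow> bool" where
  "dominated v \<longleftrightarrow> (\<exists>k<m. v = p k \<or> E v (p k))"

lemma no_undominated_nbr_at_start:
  assumes u: "u \<in> V" "u \<notin> p ` {..<m}" "\<forall>k<m. E u (p k) \<longleftrightarrow> k \<le> 1"
    and w: "w \<in> V" "\<not> dominated w" "E w u" and "0 < m"
  shows False
proof -
  let ?q = "case_nat u (\<lambda>t. p (1 + t))"
  have q: "induced_path V E ?q (Suc (m - 1))"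
  proof (rule induced_path_Cons)
    show "induced_path V E (\<lambda>t. p (1 + t)) (m - 1)"
      using induced_path_shift[OF induced, of 1 "m - 1"] \<open>0 < m\<close> by simp
    show "u \<notin> (\<lambda>t. p (1 + t)) ` {..<m - 1}" using u(2) by auto
  qed (use u in auto)
  have "induced_path V E (case_nat w ?q) (Suc (Suc (m - 1)))"
  proof (rule induced_path_Cons[OF q w(1)])
    have "w \<noteq> u" using w not_adj_self by auto
    moreover have "w \<notin> p ` {..<m}" using w(2) unfolding dominated_def by auto
    moreover have "(\<lambda>t. p (1 + t)) ` {..<m - 1} \<subseteq> p ` {..<m}" by (intro image_subsetI imageI) simp
    ultimately show "w \<notin> ?q ` {..<Suc (m - 1)}" unfolding case_nat_image_lessThan_Suc by blast
    show "\<forall>k<Suc (m - 1). E w (?q k) \<longleftrightarrow> k = 0"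
      using w(2,3) unfolding dominated_def by (auto split: nat.split)
  qed
  then show False using longest \<open>0 < m\<close> by fastforce
qed

lemma no_undominated_nbr_at_end:
  assumes u: "u \<in> V" "u \<notin> p ` {..<m}" "\<forall>k<m. E u (p k) \<longleftrightarrow> k + 2 \<ge> m"
    and w: "w \<in> V" "\<not> dominated w" "E w u" and "0 < m"
  shows False
proof -
  let ?q = "p(m - 1 := u)"
  have q: "induced_path V E ?q (Suc (m - 1))"
  proof (rule induced_path_snoc)
    show "induced_path V E p (m - 1)" using induced_path_shift[OF induced, of 0 "m - 1"] by simp
    show "u \<notin> p ` {..<m - 1}" using u(2) by auto
  qed (use u in auto)
  have "induced_path V E (?q(Suc (m - 1) := w)) (Suc (Suc (m - 1)))"
  proof (rule induced_path_snoc[OF q w(1)])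
    have "w \<noteq> u" using w not_adj_self by auto
    then show "w \<notin> ?q ` {..<Suc (m - 1)}" using w(2) \<open>0 < m\<close> unfolding dominated_def by auto
    show "\<forall>k<Suc (m - 1). E w (?q k) \<longleftrightarrow> Suc k = Suc (m - 1)"
      using w(2,3) unfolding dominated_def by auto
  qed
  then show False using longest \<open>0 < m\<close> by fastforce
qed

lemma dominated_nbr:
  assumes u: "u \<in> V" "dominated u" and w: "w \<in> V" "E u w"
  shows "dominated w"
proof (rule ccontr)
  assume nd: "\<not> dominated w"
  then have wP: "w \<noteq> p k" "p k \<noteq> w" "\<not> E w (p k)" "\<not> E (p k) w" if "k < m" for k
    using that adj_sym[OF path_vertex w(1)] unfolding dominated_def by blast+
  have wu: "E w u" using adj_sym u w by blast
  have uP: "u \<notin> p ` {..<m}" using wP wu by auto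
  obtain k0 where "k0 < m" "E u (p k0)" using u(2) uP unfolding dominated_def by auto
  note nbrs_cases = off_path_nbrs_cases[OF u(1) uP this]
  have u_sym: "E (p k) u \<longleftrightarrow> E u (p k)" if "k < m" for k using adj_sym u(1) path_vertex that by blast
  have "0 < m" using \<open>k0 < m\<close> by simp
  show False
  proof (cases "m = 4 \<and> (\<forall>k<m. E u (p k))")
    case True
    then show False
      by (intro no_induced_claw[of u "p 0" "p 2" w])
        (simp_all add: u w wu path_vertex path_adj_iff path_eq_iff u_sym wP)
  next
    case False
    then obtain i where i: "i < m" "\<forall>k<m. E u (p k) \<longleftrightarrow> path_E i k \<or> k = i" using nbrs_cases by blast
    consider "i = 0" | "i + 1 = m" | "0 < i" "i + 1 < m" using i by linarith
    then show False
    proof cases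
      case 1
      then have "\<forall>k<m. E u (p k) \<longleftrightarrow> k \<le> 1" using i(2) unfolding path_E_def by auto
      from no_undominated_nbr_at_start[OF u(1) uP this w(1) nd wu \<open>0 < m\<close>] show False .
    next
      case 2
      then have "\<forall>k<m. E u (p k) \<longleftrightarrow> k + 2 \<ge> m" using i(2) unfolding path_E_def by auto
      from no_undominated_nbr_at_end[OF u(1) uP this w(1) nd wu \<open>0 < m\<close>] show False .
    next
      case 3
      then show False using i(2)
        by (intro no_induced_claw[of u "p (i - 1)" "p (i + 1)" w])
          (simp_all add: u w wu path_vertex path_adj_iff path_eq_iff u_sym wP path_E_def)
    qed
  qed
qed

lemma all_dominated:
  assumes "connected_graph V E" "0 < m" "v \<in> V"
  shows "dominated v"
proof -
  obtain xs where xs: "walk V E xs" "hd xs = p 0" "last xs = v"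
    using assms path_vertex unfolding connected_graph_def by blast
  then have xs': "xs \<noteq> []" "set xs \<subseteq> V" unfolding walk_def by auto
  have "dominated (xs ! i)" if "i < length xs" for i
    using that
  proof (induction i)
    case 0
    have "xs ! 0 = p 0" using xs(2) hd_conv_nth[OF xs'(1)] by simp
    then show ?case using assms(2) unfolding dominated_def by blast
  next
    case (Suc i)
    have step: "E (xs ! i) (xs ! Suc i)" using xs(1) Suc.prems unfolding walk_def by blast
    have "xs ! i \<in> V" "xs ! Suc i \<in> V" using xs'(2) Suc.prems nth_mem by fastforce+
    moreover have "dominated (xs ! i)" using Suc by simp
    ultimately show ?case using dominated_nbr step by blast
  qed
  moreover have "v = xs ! (length xs - 1)" using xs(3) last_conv_nth[OF xs'(1)] by simp
  ultimately show ?thesis using xs'(1) by simp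
qed

section \<open>Vertex types\<close>

definition has_type :: "'a \<Rightarrow> nat \<Rightarrow> bool" where
  "has_type v i \<longleftrightarrow> (\<forall>k<m. (E v (p k) \<or> v = p k) \<longleftrightarrow> path_E i k \<or> k = i)"

lemma has_type_path_vertex: "i < m \<Longrightarrow> has_type (p i) i"
  unfolding has_type_def path_E_def using path_adj_iff path_eq_iff by auto

lemma has_type_off_path:
  "v \<notin> p ` {..<m} \<Longrightarrow> has_type v i \<longleftrightarrow> (\<forall>k<m. E v (p k) \<longleftrightarrow> path_E i k \<or> k = i)"
  unfolding has_type_def by auto

lemma has_type_unique:
  assumes "3 \<le> m" "has_type v i" "has_type v j" "i < m" "j < m"
  shows "i = j"
proof -
  have "path_E i k \<or> k = i \<longleftrightarrow> path_E j k \<or> k = j" if "k < m" for k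
    using assms(2,3) that unfolding has_type_def by blast
  from this[of i] this[of j] this[of "i - 1"] this[of "j - 1"] this[of "i + 1"] this[of "j + 1"]
    this[of 0] this[of 2]
  show ?thesis using assms(1,4,5) unfolding path_E_def by presburger
qed

lemma has_type_on_path: "3 \<le> m \<Longrightarrow> has_type v i \<Longrightarrow> i < m \<Longrightarrow> v \<in> p ` {..<m} \<Longrightarrow> v = p i"
  using has_type_unique has_type_path_vertex by blast

lemma has_type_adj_iff:
  "3 \<le> m \<Longrightarrow> has_type v i \<Longrightarrow> i < m \<Longrightarrow> k < m \<Longrightarrow> k \<noteq> i \<Longrightarrow> E v (p k) \<longleftrightarrow> path_E i k"
  using has_type_on_path[of v i] path_eq_iff unfolding has_type_def by blast

lemma has_type_adj_own: "has_type v i \<Longrightarrow> i < m \<Longrightarrow> v \<noteq> p i \<Longrightarrow> E v (p i)"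
  unfolding has_type_def by blast

lemma has_type_or_complete:
  assumes "connected_graph V E" "0 < m" "v \<in> V"
  shows "(\<exists>i<m. has_type v i) \<or> (m = 4 \<and> v \<notin> p ` {..<m} \<and> (\<forall>k<m. E v (p k)))"
proof (cases "v \<in> p ` {..<m}")
  case True
  then show ?thesis using has_type_path_vertex by auto
next
  case False
  obtain k0 where "k0 < m" "E v (p k0)"
    using all_dominated[OF assms] False unfolding dominated_def by auto
  from off_path_nbrs_cases[OF assms(3) False this] show ?thesis using has_type_off_path[OF False] False by blast
qed

lemma length_pos: "v \<in> V \<Longrightarrow> 0 < m"
  using longest[OF induced_path_single] by fastforce

lemma length_ge_3:
  assumes "connected_graph V E" "independent_triple V E a b c"
  shows "3 \<le> m"
proof (rule ccontr)
  assume "\<not> 3 \<le> m"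
  note abc = independent_tripleD[OF assms(2)]
  have "0 < m" using length_pos[OF abc(1)] .
  have off_path_adj: "E v (p 0)" if v: "v \<in> V" "v \<notin> p ` {..<m}" for v
  proof -
    obtain i where "i < m" "has_type v i"
      using has_type_or_complete[OF assms(1) \<open>0 < m\<close> v(1)] \<open>\<not> 3 \<le> m\<close> by auto
    then show ?thesis using has_type_off_path[OF v(2)] \<open>0 < m\<close> \<open>\<not> 3 \<le> m\<close>
      by (auto simp: path_E_def)
  qed
  have no_P3: False if "x \<in> V" "y \<in> V" "x \<noteq> y" "\<not> E x y" "x \<notin> p ` {..<m}" "y \<notin> p ` {..<m}" for x y
  proof -
    have "E (p 0) y" using off_path_adj that adj_sym path_vertex \<open>0 < m\<close> by blast
    then show False using longest[OF induced_P3[of x "p 0" y]] off_path_adj that path_vertex \<open>0 < m\<close>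
        \<open>\<not> 3 \<le> m\<close> by simp
  qed
  have path_clique: "E x y" if xy: "x \<in> p ` {..<m}" "y \<in> p ` {..<m}" "x \<noteq> y" for x y
  proof -
    obtain k l where kl: "k < m" "l < m" "x = p k" "y = p l" using xy(1,2) by blast
    moreover from kl have "k \<noteq> l" using xy(3) by blast
    ultimately show ?thesis using path_adj_iff \<open>\<not> 3 \<le> m\<close> by auto
  qed
  consider "a \<notin> p ` {..<m}" "b \<notin> p ` {..<m}" | "a \<notin> p ` {..<m}" "c \<notin> p ` {..<m}"
    | "b \<notin> p ` {..<m}" "c \<notin> p ` {..<m}"
    using path_clique abc by blast
  then show False using no_P3 abc by cases blast+
qed

lemma has_type_off_path_adj:
  assumes "v \<in> V" "has_type v i" "v \<notin> p ` {..<m}" "k < m"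
  shows "E v (p k) \<longleftrightarrow> path_E i k \<or> k = i" "E (p k) v \<longleftrightarrow> path_E i k \<or> k = i"
  using assms has_type_off_path adj_sym path_vertex by blast+

lemma same_type_adj:
  assumes m: "3 \<le> m" and v: "v \<in> V" "has_type v i" and w: "w \<in> V" "has_type w i"
    and "i < m" "v \<noteq> w"
  shows "E v w"
proof (rule ccontr)
  assume nvw: "\<not> E v w"
  then have nwv: "\<not> E w v" using adj_sym v w by blast
  have vP: "v \<notin> p ` {..<m}"
    using has_type_on_path[OF m v(2) \<open>i < m\<close>] has_type_adj_own[OF w(2) \<open>i < m\<close>] nwv \<open>v \<noteq> w\<close> by auto
  have wP: "w \<notin> p ` {..<m}"
    using has_type_on_path[OF m w(2) \<open>i < m\<close>] has_type_adj_own[OF v(2) \<open>i < m\<close>] nvw \<open>v \<noteq> w\<close> by auto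
  note adj = has_type_off_path_adj[OF v vP] has_type_off_path_adj[OF w wP]
  have off: "v \<noteq> p k" "p k \<noteq> v" "w \<noteq> p k" "p k \<noteq> w" if "k < m" for k using vP wP that by auto
  consider "0 < i" "i + 1 < m" | "i = 0" | "i + 1 = m" using \<open>i < m\<close> by linarith
  then show False
  proof cases
    case 1
    then show False using v w nvw \<open>v \<noteq> w\<close>
      by (intro no_induced_C4[of v "p (i - 1)" w "p (i + 1)"])
        (auto simp: path_vertex path_adj_iff path_eq_iff adj path_E_def)
  next
    case 2
    then show False using v w m nvw nwv \<open>v \<noteq> w\<close>
      by (intro no_induced_claw[of "p 1" v w "p 2"])
        (auto simp: path_vertex path_adj_iff path_eq_iff adj path_E_def off)
  next
    case 3
    then show False using v w m nvw nwv \<open>v \<noteq> w\<close>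
      by (intro no_induced_claw[of "p (i - 1)" v w "p (i - 2)"])
        (auto simp: path_vertex path_adj_iff path_eq_iff adj path_E_def off)
  qed
qed

lemma consecutive_types_adj:
  assumes m: "3 \<le> m" and v: "v \<in> V" "has_type v i" and w: "w \<in> V" "has_type w (Suc i)"
    and "Suc i < m" and room: "i + 3 < m \<or> 2 \<le> i"
  shows "E v w"
proof (rule ccontr)
  assume nvw: "\<not> E v w"
  then have nwv: "\<not> E w v" using adj_sym v w by blast
  have "i < m" using \<open>Suc i < m\<close> by simp
  have vP: "v \<notin> p ` {..<m}"
    using has_type_on_path[OF m v(2) \<open>i < m\<close>] has_type_adj_iff[OF m w(2) \<open>Suc i < m\<close> \<open>i < m\<close>] nwv
    by (auto simp: path_E_def)
  have wP: "w \<notin> p ` {..<m}"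
    using has_type_on_path[OF m w(2) \<open>Suc i < m\<close>] has_type_adj_iff[OF m v(2) \<open>i < m\<close> \<open>Suc i < m\<close>] nvw
    by (auto simp: path_E_def)
  note adj = has_type_off_path_adj[OF v vP] has_type_off_path_adj[OF w wP]
  have off: "v \<noteq> p k" "p k \<noteq> v" "w \<noteq> p k" "p k \<noteq> w" if "k < m" for k using vP wP that by auto
  show False
  proof (cases "i + 3 < m")
    case True
    then show False using v w nvw nwv
      by (intro no_induced_bull[of "p (i + 2)" "p (i + 1)" w "p (i + 3)" v])
        (auto simp: path_vertex path_adj_iff path_eq_iff adj path_E_def off)
  next
    case False
    then show False using v w room \<open>i < m\<close> nvw nwv
      by (intro no_induced_bull[of "p (i - 1)" "p i" v "p (i - 2)" w])
        (auto simp: path_vertex path_adj_iff path_eq_iff adj path_E_def off)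
  qed
qed

lemma types_at_distance_2_not_adj:
  assumes m: "5 \<le> m" and v: "v \<in> V" "has_type v i" "v \<notin> p ` {..<m}"
    and w: "w \<in> V" "has_type w (i + 2)" "w \<notin> p ` {..<m}" and "i + 2 < m"
  shows "\<not> E v w"
proof
  assume vw: "E v w"
  then have wv: "E w v" using adj_sym v w by blast
  note adj = has_type_off_path_adj[OF v(1-3)] has_type_off_path_adj[OF w(1-3)]
  have off: "v \<noteq> p k" "p k \<noteq> v" "w \<noteq> p k" "p k \<noteq> w" if "k < m" for k using v(3) w(3) that by auto
  consider "1 \<le> i" "i + 3 < m" | "i = 0" | "i + 3 = m" using \<open>i + 2 < m\<close> by linarith
  then show False
  proof cases
    case 1
    then show False using v w vw wv
      by (intro no_induced_bull[of v w "p (i + 1)" "p (i - 1)" "p (i + 3)"])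
        (auto simp: path_vertex path_adj_iff path_eq_iff adj path_E_def off)
  next
    case 2
    then show False using v w m vw wv
      by (intro no_induced_bull[of "p (i + 3)" w "p (i + 2)" "p (i + 4)" v])
        (auto simp: path_vertex path_adj_iff path_eq_iff adj path_E_def off)
  next
    case 3
    then show False using v w m vw wv
      by (intro no_induced_bull[of "p (i - 1)" v "p i" "p (i - 2)" w])
        (auto simp: path_vertex path_adj_iff path_eq_iff adj path_E_def off)
  qed
qed

lemma types_at_distance_ge_3_not_adj:
  assumes v: "v \<in> V" "has_type v i" "v \<notin> p ` {..<m}"
    and w: "w \<in> V" "has_type w j" "w \<notin> p ` {..<m}" and "i + 3 \<le> j" "j < m"
  shows "\<not> E v w"
proof
  assume vw: "E v w"
  note adj = has_type_off_path_adj[OF v] has_type_off_path_adj[OF w]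
  let ?r = "case_nat v (\<lambda>t. p (i + 1 + t))"
  have r: "induced_path V E ?r (Suc (j - i - 1))"
  proof (rule induced_path_Cons)
    show "induced_path V E (\<lambda>t. p (i + 1 + t)) (j - i - 1)"
      using induced_path_shift[OF induced, of "i + 1" "j - i - 1"] assms(7,8) by simp
    show "\<forall>k<j - i - 1. E v (p (i + 1 + k)) \<longleftrightarrow> k = 0"
      using adj assms(7,8) by (auto simp: path_E_def)
  qed (use v assms(8) in auto)
  show False
  proof (rule no_vertex_closing_induced_path[OF r _ w(1)])
    show "3 \<le> Suc (j - i - 1)" using assms(7) by simp
    have "w \<noteq> v" using not_adj_self vw v by auto
    then show "w \<notin> ?r ` {..<Suc (j - i - 1)}"
      using w(3) assms(7,8) unfolding case_nat_image_lessThan_Suc by auto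
    have "E w v" using adj_sym v w vw by blast
    then show "\<forall>k<Suc (j - i - 1). E w (?r k) \<longleftrightarrow> k = 0 \<or> Suc k = Suc (j - i - 1)"
      using adj assms(7,8) by (auto simp: path_E_def split: nat.split)
  qed
qed

lemma far_types_not_adj:
  assumes m: "5 \<le> m" and v: "v \<in> V" "has_type v i" and w: "w \<in> V" "has_type w j"
    and "i + 2 \<le> j" "j < m"
  shows "\<not> E v w"
proof
  assume vw: "E v w"
  have "3 \<le> m" "i < m" "i \<noteq> j" "\<not> path_E i j" "\<not> path_E j i"
    using assms(6,7) m by (auto simp: path_E_def)
  note type_adj = has_type_adj_iff[OF \<open>3 \<le> m\<close>]
  have vP: "v \<notin> p ` {..<m}"
    using has_type_on_path[OF \<open>3 \<le> m\<close> v(2) \<open>i < m\<close>] type_adj[OF w(2) \<open>j < m\<close> \<open>i < m\<close>]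
      adj_sym[OF v(1) w(1) vw] \<open>i \<noteq> j\<close> \<open>\<not> path_E j i\<close> by auto
  have wP: "w \<notin> p ` {..<m}"
    using has_type_on_path[OF \<open>3 \<le> m\<close> w(2) \<open>j < m\<close>] type_adj[OF v(2) \<open>i < m\<close> \<open>j < m\<close>]
      vw \<open>i \<noteq> j\<close> \<open>\<not> path_E i j\<close> by auto
  show False
  proof (cases "j = i + 2")
    case True
    then show False using types_at_distance_2_not_adj[OF m v vP w(1)] w(2) wP vw assms(7) by simp
  next
    case False
    then show False using types_at_distance_ge_3_not_adj[OF v vP w wP] assms(6,7) vw by simp
  qed
qed

lemma close_types_adj:
  assumes m: "3 \<le> m" and v: "v \<in> V" "has_type v i" and w: "w \<in> V" "has_type w j"
    and "v \<noteq> w" and close: "i \<le> j + 1" "j \<le> i + 1" and bounds: "i < m" "j < m"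
    and room: "i = j \<or> min i j + 3 < m \<or> 2 \<le> min i j"
  shows "E v w"
proof -
  consider "i = j" | "j = Suc i" | "i = Suc j" using close by linarith
  then show ?thesis
  proof cases
    case 1
    then show ?thesis using same_type_adj[OF m v w[unfolded 1[symmetric]]] \<open>v \<noteq> w\<close> bounds by simp
  next
    case 2
    then show ?thesis using consecutive_types_adj[OF m v, of w] w room bounds by simp
  next
    case 3
    then have "E w v" using consecutive_types_adj[OF m w, of v] v room bounds by simp
    then show ?thesis using adj_sym v w by blast
  qed
qed

lemma complete_vertices_adj:
  assumes "3 \<le> m" and x: "x \<in> V" "x \<notin> p ` {..<m}" "\<forall>k<m. E x (p k)"
    and y: "y \<in> V" "y \<notin> p ` {..<m}" "\<forall>k<m. E y (p k)" and "x \<noteq> y"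
  shows "E x y"
proof (rule ccontr)
  assume "\<not> E x y"
  moreover have "E (p 0) y" "E (p 2) x" using x y assms(1) adj_sym path_vertex by auto
  ultimately show False
    using x y assms(1,8) by (intro no_induced_C4[of x "p 0" y "p 2"]) (simp_all add: path_vertex path_adj_iff path_eq_iff)
qed

section \<open>Longest induced paths with three or four vertices\<close>

lemma independent_triple_not_in_closed_nbhd:
  assumes "k < m" "independent_triple V E a b c"
    and nbhd: "E a (p k) \<or> a = p k" "E b (p k) \<or> b = p k" "E c (p k) \<or> c = p k"
  shows False
proof -
  note abc = independent_tripleD[OF assms(2)]
  have sym: "E (p k) x \<longleftrightarrow> E x (p k)" if "x \<in> V" for x using adj_sym path_vertex assms(1) that by blast
  have "a \<noteq> p k" "b \<noteq> p k" "c \<noteq> p k" using abc nbhd sym by metis+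
  then show False
    using nbhd abc path_vertex[OF assms(1)] sym by (intro no_induced_claw[of "p k" a b c]) auto
qed

lemma no_independent_triple_of_length_3:
  assumes "connected_graph V E" "m = 3" "independent_triple V E a b c"
  shows False
proof -
  have "E v (p 1) \<or> v = p 1" if v: "v \<in> V" for v
  proof -
    obtain i where "i < m" "has_type v i" using has_type_or_complete[OF assms(1) _ v] assms(2) by auto
    then show ?thesis using assms(2) unfolding has_type_def path_E_def by auto
  qed
  then show False
    using independent_triple_not_in_closed_nbhd[of 1, OF _ assms(3)] independent_tripleD[OF assms(3)] assms(2)
    by simp
qed

lemma no_independent_low_high_complete:
  assumes "m = 4" and x: "x \<in> V" "has_type x i" "i \<le> 1" and y: "y \<in> V" "has_type y j" "2 \<le> j" "j < 4"
    and z: "z \<in> V" "z \<notin> p ` {..<m}" "\<forall>k<m. E z (p k)"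
    and ind: "\<not> E x y" "\<not> E x z" "\<not> E y z" and distinct: "x \<noteq> y" "x \<noteq> z" "y \<noteq> z"
  shows False
proof -
  have xyz: "independent_triple V E x y z"
    using x(1) y(1) z(1) ind distinct unfolding independent_triple_def by blast
  have "E (p k) z" if "k < m" for k using z adj_sym path_vertex that by blast
  then have xP: "x \<notin> p ` {..<m}" and yP: "y \<notin> p ` {..<m}" using ind by auto
  note adj = has_type_off_path_adj[OF x(1,2) xP] has_type_off_path_adj[OF y(1,2) yP]
  have closed: "E v (p k) \<or> v = p k \<longleftrightarrow> path_E l k \<or> k = l" if "has_type v l" "k < m" for v l k
    using that unfolding has_type_def by blast
  consider "j = 2" | "j = 3" "i = 1" | "j = 3" "i = 0" using x(3) y(3,4) by linarith
  then show False
  proof cases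
    case 1
    have "E x (p 1) \<or> x = p 1" "E y (p 1) \<or> y = p 1"
      using closed[OF x(2), of 1] closed[OF y(2), of 1] x(3) 1 assms(1) by (auto simp: path_E_def)
    then show False using independent_triple_not_in_closed_nbhd[OF _ xyz, of 1] z(3) assms(1) by simp
  next
    case 2
    have "E x (p 2) \<or> x = p 2" "E y (p 2) \<or> y = p 2"
      using closed[OF x(2), of 2] closed[OF y(2), of 2] 2 assms(1) by (auto simp: path_E_def)
    then show False using independent_triple_not_in_closed_nbhd[OF _ xyz, of 2] z(3) assms(1) by simp
  next
    case 3
    have "\<not> E z x" "\<not> E z y" using ind adj_sym x y z by blast+
    with 3 show False using x y z ind assms(1) adj_sym[OF z(1) path_vertex]
      by (intro no_induced_bull[of "p 1" "p 2" z x y]) (auto simp: path_vertex path_adj_iff adj path_E_def)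
  qed
qed

lemma no_independent_triple_of_length_4:
  assumes "connected_graph V E" "m = 4" "independent_triple V E a b c"
  shows False
proof -
  note abc = independent_tripleD[OF assms(3)]
  define I where "I = {a, b, c}"
  have IV: "x \<in> V" if "x \<in> I" for x using that abc unfolding I_def by blast
  have ind: "\<not> E x y" if "x \<in> I" "y \<in> I" for x y
    using that abc adj_sym not_adj_self unfolding I_def by blast
  define low where "low v \<longleftrightarrow> (\<exists>i\<le>1. has_type v i)" for v
  define high where "high v \<longleftrightarrow> (\<exists>j. 2 \<le> j \<and> j < 4 \<and> has_type v j)" for v
  define complete where "complete v \<longleftrightarrow> v \<notin> p ` {..<m} \<and> (\<forall>k<m. E v (p k))" for v
  have classes: "low v \<or> high v \<or> complete v" if "v \<in> V" for v
  proof -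
    have "(\<exists>i<4. has_type v i) \<or> complete v"
      using has_type_or_complete[OF assms(1) _ that] assms(2) unfolding complete_def by auto
    then show ?thesis
    proof (elim disjE exE conjE)
      fix i assume "i < 4" "has_type v i"
      then show ?thesis unfolding low_def high_def by (cases "i \<le> 1") auto
    qed simp
  qed
  have low_pair: False if xy: "x \<in> I" "y \<in> I" "x \<noteq> y" "low x" "low y" for x y
  proof -
    obtain i j where ij: "i \<le> 1" "has_type x i" "j \<le> 1" "has_type y j" using xy(4,5) unfolding low_def by blast
    moreover have "i = j \<or> min i j + 3 < m" using ij(1,3) assms(2) by (cases "i = j") (auto simp: min_def)
    ultimately have "E x y" using close_types_adj[of x i y j] IV xy(1-3) assms(2) by auto
    then show False using ind xy by blast
  qed
  have high_pair: False if xy: "x \<in> I" "y \<in> I" "x \<noteq> y" "high x" "high y" for x y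
  proof -
    obtain i j where "2 \<le> i" "i < 4" "has_type x i" "2 \<le> j" "j < 4" "has_type y j"
      using xy(4,5) unfolding high_def by blast
    then have "E x y" using close_types_adj[of x i y j] IV xy(1-3) assms(2) by auto
    then show False using ind xy by blast
  qed
  have complete_pair: False if "x \<in> I" "y \<in> I" "x \<noteq> y" "complete x" "complete y" for x y
    using complete_vertices_adj[of x y] ind that IV assms(2) unfolding complete_def by auto
  have mixed: False if "x \<in> I" "y \<in> I" "z \<in> I" "x \<noteq> y" "x \<noteq> z" "y \<noteq> z" "low x" "high y" "complete z" for x y z
    using no_independent_low_high_complete[OF assms(2), of x _ y _ z] ind that IV
    unfolding low_def high_def complete_def by blast
  have "a \<in> I" "b \<in> I" "c \<in> I" unfolding I_def by simp_all
  then show False using classes abc low_pair high_pair complete_pair mixed by metis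
qed

section \<open>The expansion and the diameter\<close>

lemma has_type_if_long:
  assumes "connected_graph V E" "5 \<le> m" "v \<in> V"
  obtains i where "i < m" "has_type v i"
  using has_type_or_complete[OF assms(1) _ assms(3)] assms(2) that by auto

lemma walk_type_growth:
  assumes "connected_graph V E" "5 \<le> m"
  shows "walk V E xs \<Longrightarrow> i < m \<Longrightarrow> has_type (hd xs) i \<Longrightarrow> j < m \<Longrightarrow> has_type (last xs) j
    \<Longrightarrow> j \<le> i + (length xs - 1)"
proof (induction xs arbitrary: i)
  case Nil
  then show ?case unfolding walk_def by simp
next
  case (Cons x ys)
  show ?case
  proof (cases ys)
    case Nil
    then show ?thesis using Cons.prems has_type_unique[of x i j] assms(2) by simp
  next
    case (Cons y zs)
    then have "walk V E ys" "E x y" using walk_Cons_Cons[of V E x y zs] Cons.prems(1) by simp_all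
    moreover have "x \<in> V" "y \<in> V" using Cons.prems(1) Cons unfolding walk_def by auto
    moreover obtain k where "k < m" "has_type y k" using has_type_if_long[OF assms \<open>y \<in> V\<close>] by blast
    ultimately have "k \<le> i + 1" "j \<le> k + (length ys - 1)"
      using far_types_not_adj[OF assms(2), of x i y k] Cons.IH[of k] Cons.prems Cons
      by (force, simp)
    then show ?thesis using Cons by simp
  qed
qed

lemma path_ends_dist:
  assumes "connected_graph V E" "5 \<le> m"
  shows "m - 1 \<le> dist V E (p 0) (p (m - 1))"
proof -
  have "0 < m" "m - 1 < m" using assms(2) by auto
  then obtain xs where "walk V E xs" "hd xs = p 0" "last xs = p (m - 1)"
    using assms(1) path_vertex unfolding connected_graph_def by blast
  then obtain ys where "walk V E ys" "hd ys = p 0" "last ys = p (m - 1)"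
    "length ys = Suc (dist V E (p 0) (p (m - 1)))"
    by (rule shortest_walk_exists)
  then show ?thesis
    using walk_type_growth[OF assms, of ys 0 "m - 1"] has_type_path_vertex \<open>0 < m\<close> \<open>m - 1 < m\<close> by simp
qed

definition type_set :: "nat \<Rightarrow> 'a set" where
  "type_set i = {v \<in> V. has_type v i}"

lemma expansion_by_types:
  assumes "connected_graph V E" "5 \<le> m"
  shows "expansion_of V E m path_E"
  unfolding expansion_of_def
proof (intro exI[of _ type_set] conjI allI impI ballI)
  have m3: "3 \<le> m" using assms(2) by simp
  show "type_set i \<noteq> {}" if "i < m" for i
    using has_type_path_vertex[OF that] path_vertex[OF that] unfolding type_set_def by auto
  show "type_set i \<inter> type_set j = {}" if "i < m" "j < m" "i \<noteq> j" for i j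
    using has_type_unique[OF m3] that unfolding type_set_def by auto
  show "(\<Union>i<m. type_set i) = V" using has_type_if_long[OF assms] unfolding type_set_def by blast
  show "E x y" if "i < m" "x \<in> type_set i" "y \<in> type_set i" "x \<noteq> y" for i x y
    using same_type_adj[OF m3] that unfolding type_set_def by auto
  show "E x y \<longleftrightarrow> path_E i j"
    if ij: "i < m" "j < m" "i \<noteq> j" and "x \<in> type_set i" "y \<in> type_set j" for i j x y
  proof -
    have x: "x \<in> V" "has_type x i" and y: "y \<in> V" "has_type y j" using that unfolding type_set_def by auto
    consider "j = Suc i" | "i = Suc j" | "i + 2 \<le> j" | "j + 2 \<le> i" using ij(3) by linarith
    then show ?thesis
    proof cases
      case 1
      have "i + 3 < m \<or> 2 \<le> i" using assms(2) by linarith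
      then show ?thesis using consecutive_types_adj[OF m3 x y[unfolded 1]] ij(2) 1 by (simp add: path_E_def)
    next
      case 2
      have "j + 3 < m \<or> 2 \<le> j" using assms(2) by linarith
      then have "E y x" using consecutive_types_adj[OF m3 y x[unfolded 2]] ij(1) 2 by simp
      then show ?thesis using 2 adj_sym x y by (simp add: path_E_def)
    next
      case 3
      then show ?thesis using far_types_not_adj[OF assms(2) x y] ij(2) by (simp add: path_E_def)
    next
      case 4
      then have "\<not> E y x" using far_types_not_adj[OF assms(2) y x] ij(1) by simp
      then show ?thesis using 4 adj_sym x y by (auto simp: path_E_def)
    qed
  qed
qed

end

theorem lemma7:
  fixes V :: "'a set" and E :: "'a \<Rightarrow> 'a \<Rightarrow> bool"
  assumes "graph V E"
    and "connected_graph V E"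
    and "claw_free V E" and "bull_free V E"
    and "longest_induced_cycle_le3 V E"
    and "independence_number V E \<ge> 3"
  shows "diam V E \<ge> 4 \<and> expansion_of_path V E"
proof -
  interpret chordal_claw_bull_free_graph V E using assms(1,3-5) by unfold_locales
  obtain a b c where abc: "independent_triple V E a b c"
    using independent_triple_exists[OF finite_vertices assms(6)] by blast
  obtain p m where "induced_path V E p m" "\<And>q n. induced_path V E q n \<Longrightarrow> n \<le> m"
    using longest_induced_path_exists[OF finite_vertices] by blast
  then interpret longest_induced_path V E p m by unfold_locales
  have "3 \<le> m" using length_ge_3[OF assms(2) abc] .
  moreover have "m \<noteq> 3" "m \<noteq> 4"
    using no_independent_triple_of_length_3[OF assms(2) _ abc]
      no_independent_triple_of_length_4[OF assms(2) _ abc]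
    by blast+
  ultimately have "5 \<le> m" by linarith
  then have "4 \<le> dist V E (p 0) (p (m - 1))" using path_ends_dist[OF assms(2)] by fastforce
  also have "\<dots> \<le> diam V E" using dist_le_diam[OF finite_vertices] path_vertex \<open>5 \<le> m\<close> by simp
  finally have "4 \<le> diam V E" .
  moreover have "expansion_of V E m path_E" using expansion_by_types[OF assms(2) \<open>5 \<le> m\<close>] .
  ultimately show ?thesis using \<open>5 \<le> m\<close> unfolding expansion_of_path_def by (intro conjI exI[of _ m]) auto
qed

end
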